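(* Let $i,j\in G$, let $\rho$ be a state on $L_2(G)$ with $\operatorname{Tr}K_{|\overline{b_i}\rangle\langle\overline{b_i}|}(\rho)>0$, and let $\gamma$ be a state on $L_2(G)$ such that $\operatorname{Tr}K_\gamma\big(U_jK_{|\overline{b_i}\rangle\langle\overline{b_i}|}(\rho)U_j^*\big)>0$. Then $\operatorname{Tr}_{1,2,3}(F_{i,j}\otimes I)(\rho\otimes\mathbf e(\gamma))(F_{i,j}\otimes I)>0$ and $$\Lambda_{i,j}(\rho\otimes\gamma)=\hat K_\gamma\circ K^j\circ\hat K_{|\overline{b_i}\rangle\langle\overline{b_i}|}(\rho),$$ where $K^j(\sigma)=U_j\sigma U_j^*$. Equivalently, $\Lambda_{i,j}(\rho\otimes\gamma)$ is the normalization to trace one of $K_\gamma(U_jB_i^*\rho B_iU_j^* )$.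
   Context: Fix an integer $n\ge 1$ and $G=\{1,\dots,n\}$. $L_2(G)$ is the space of functions $f:G\to\mathbb C$ with inner product $\langle f,g\rangle=\sum_{k\in G}\overline{f(k)}g(k)$; $L_2(G^2)$, $L_2(G^3)$ are the analogous spaces on $G^2,G^3$, identified with tensor products via $(f\otimes g)(k,l)=f(k)g(l)$; the three factors of $L_2(G^3)=\mathcal H_1\otimes\mathcal H_2\otimes\mathcal H_3$ are numbered 1,2,3. For a vector $f$, $|f\rangle\langle f|$ is the operator $\phi\mapsto\langle f,\phi\rangle f$. $I$ is the identity. A state is a positive operator of trace 1. For $k,l\in G$, $k\oplus l$ is the unique element of $G$ congruent to $k+l$ modulo $n$. $\mathcal O_g$ is the multiplication operator $(\mathcal O_gf)(k)=g(k)f(k)$. $J:L_2(G)\to L_2(G^2)$ is $(Jf)(k,l)=f(k)\delta_{k,l}$. $U_k$ is the unitary $(U_kf)(m)=f(k\oplus m)$. $(b_k)_{k\in G}$ is a fixed orthonormal basis of $L_2(G)$, $B_k=\mathcal O_{b_k}$, $\overline{b_i}$ the complex conjugate function. $\xi_{k,l}(m,r)=b_k(m)\delta_{m,r\oplus l}$ and $F_{i,j}=|\xi_{i,j}\rangle\langle\xi_{i,j}|$ (an operator on $\mathcal H_1\otimes\mathcal H_2$). For a state $\gamma$, $\mathbf e(\gamma):=J\gamma J^*$ (a state on $\mathcal H_2\otimes\mathcal H_3$). For states $\rho,\gamma$ with positive denominator, $$\Lambda_{i,j}(\rho\otimes\gamma):=\frac{\operatorname{Tr}_{1,2}(F_{i,j}\otimes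 I)(\rho\otimes\mathbf e(\gamma))(F_{i,j}\otimes I)}{\operatorname{Tr}_{1,2,3}(F_{i,j}\otimes I)(\rho\otimes\mathbf e(\gamma))(F_{i,j}\otimes I)},$$ with $\operatorname{Tr}_{1,2}$ the partial trace over $\mathcal H_1\otimes\mathcal H_2$ and $\operatorname{Tr}_{1,2,3}$ the full trace. For a positive operator $\tau=\sum_k\gamma_k|h_k\rangle\langle h_k|$ ($\gamma_k\ge0$, $(h_k)$ orthonormal basis), $K_\tau(\rho):=\sum_k\gamma_k\mathcal O_{h_k}\rho\mathcal O_{h_k}^*$ for positive operators $\rho$ (independent of the representation of $\tau$); for $\rho$ with $\operatorname{Tr}K_\tau(\rho)>0$, $\hat K_\tau(\rho):=K_\tau(\rho)/\operatorname{Tr}K_\tau(\rho)$. In particular $K_{|\overline{b_i}\rangle\langle\overline{b_i}|}(\rho)=B_i^*\rho B_i$. *)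

theory Defs
  imports Complex_Main "HOL-Library.Complex_Order"
begin

text \<open>Finite-dimensional operators are represented by their kernels (matrices):
  an operator A from L2(Y) to L2(X) is a function X -> Y -> complex, acting by
  (A f)(x) = sum over y of A x y * f y.\<close>

type_synonym ('a, 'b) kernel = "'a \<Rightarrow> 'b \<Rightarrow> complex"

definition G :: "nat \<Rightarrow> nat set" where
  "G n = {1..n}"

definition oplus :: "nat \<Rightarrow> nat \<Rightarrow> nat \<Rightarrow> nat" where
  "oplus n k l = (THE m. m \<in> G n \<and> m mod n = (k + l) mod n)"

definition inner :: "'a set \<Rightarrow> ('a \<Rightarrow> complex) \<Rightarrow> ('a \<Rightarrow> complex) \<Rightarrow> complex" where
  "inner X f g = (\<Sum>x\<in>X. cnj (f x) * g x)"

definition mmul :: "'z set \<Rightarrow> ('x, 'z) kernel \<Rightarrow> ('z, 'y) kernel \<Rightarrow> ('x, 'y) kernel" where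
  "mmul Z A B = (\<lambda>x y. \<Sum>z\<in>Z. A x z * B z y)"

definition adj :: "('x, 'y) kernel \<Rightarrow> ('y, 'x) kernel" where
  "adj A = (\<lambda>y x. cnj (A x y))"

definition trace :: "'a set \<Rightarrow> ('a, 'a) kernel \<Rightarrow> complex" where
  "trace X A = (\<Sum>x\<in>X. A x x)"

definition positive_op :: "'a set \<Rightarrow> ('a, 'a) kernel \<Rightarrow> bool" where
  "positive_op X A \<longleftrightarrow> (\<forall>\<phi>. 0 \<le> (\<Sum>x\<in>X. \<Sum>y\<in>X. cnj (\<phi> x) * A x y * \<phi> y))"

definition is_state :: "'a set \<Rightarrow> ('a, 'a) kernel \<Rightarrow> bool" where
  "is_state X A \<longleftrightarrow> positive_op X A \<and> trace X A = 1"

definition ketbra :: "('a \<Rightarrow> complex) \<Rightarrow> ('a, 'a) kernel" where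
  "ketbra f = (\<lambda>x y. f x * cnj (f y))"

definition idop :: "('a, 'a) kernel" where
  "idop = (\<lambda>x y. if x = y then 1 else 0)"

definition tensor :: "('a, 'a) kernel \<Rightarrow> ('b, 'b) kernel \<Rightarrow> ('a \<times> 'b, 'a \<times> 'b) kernel" where
  "tensor A B = (\<lambda>(x, y) (x', y'). A x x' * B y y')"

definition assoc_op :: "('a \<times> 'b \<times> 'c, 'a \<times> 'b \<times> 'c) kernel \<Rightarrow> (('a \<times> 'b) \<times> 'c, ('a \<times> 'b) \<times> 'c) kernel" where
  "assoc_op C = (\<lambda>((a, b), c) ((a', b'), c'). C (a, b, c) (a', b', c'))"

definition ptrace1 :: "'a set \<Rightarrow> ('a \<times> 'b, 'a \<times> 'b) kernel \<Rightarrow> ('b, 'b) kernel" where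
  "ptrace1 X C = (\<lambda>y y'. \<Sum>x\<in>X. C (x, y) (x, y'))"

definition mult_op :: "('a \<Rightarrow> complex) \<Rightarrow> ('a, 'a) kernel" where
  "mult_op g = (\<lambda>x y. if x = y then g x else 0)"

definition Jop :: "(nat \<times> nat, nat) kernel" where
  "Jop = (\<lambda>(k, l) m. if k = l \<and> k = m then 1 else 0)"

definition Uop :: "nat \<Rightarrow> nat \<Rightarrow> (nat, nat) kernel" where
  "Uop n k = (\<lambda>m m'. if m' = oplus n k m then 1 else 0)"

definition orthonormal_basis :: "nat \<Rightarrow> (nat \<Rightarrow> nat \<Rightarrow> complex) \<Rightarrow> bool" where
  "orthonormal_basis n h \<longleftrightarrow>
     (\<forall>k\<in>G n. \<forall>l\<in>G n. inner (G n) (h k) (h l) = (if k = l then 1 else 0))"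

definition Kmap :: "nat \<Rightarrow> (nat, nat) kernel \<Rightarrow> (nat, nat) kernel \<Rightarrow> (nat, nat) kernel" where
  "Kmap n \<tau> \<rho> = (SOME \<sigma>. \<exists>\<gamma>s h. orthonormal_basis n h \<and> (\<forall>k\<in>G n. 0 \<le> \<gamma>s k) \<and>
      (\<forall>x\<in>G n. \<forall>y\<in>G n. \<tau> x y = (\<Sum>k\<in>G n. \<gamma>s k * ketbra (h k) x y)) \<and>
      \<sigma> = (\<lambda>x y. \<Sum>k\<in>G n. \<gamma>s k *
              mmul (G n) (mmul (G n) (mult_op (h k)) \<rho>) (adj (mult_op (h k))) x y))"

definition Khat :: "nat \<Rightarrow> (nat, nat) kernel \<Rightarrow> (nat, nat) kernel \<Rightarrow> (nat, nat) kernel" where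
  "Khat n \<tau> \<rho> = (\<lambda>x y. Kmap n \<tau> \<rho> x y / trace (G n) (Kmap n \<tau> \<rho>))"

definition Kconj :: "nat \<Rightarrow> nat \<Rightarrow> (nat, nat) kernel \<Rightarrow> (nat, nat) kernel" where
  "Kconj n j \<sigma> = mmul (G n) (mmul (G n) (Uop n j) \<sigma>) (adj (Uop n j))"

definition xi :: "nat \<Rightarrow> (nat \<Rightarrow> nat \<Rightarrow> complex) \<Rightarrow> nat \<Rightarrow> nat \<Rightarrow> nat \<times> nat \<Rightarrow> complex" where
  "xi n b k l = (\<lambda>(m, r). if m = oplus n r l then b k m else 0)"

definition Fop :: "nat \<Rightarrow> (nat \<Rightarrow> nat \<Rightarrow> complex) \<Rightarrow> nat \<Rightarrow> nat \<Rightarrow> (nat \<times> nat, nat \<times> nat) kernel" where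
  "Fop n b i j = ketbra (xi n b i j)"

definition eop :: "nat \<Rightarrow> (nat, nat) kernel \<Rightarrow> (nat \<times> nat, nat \<times> nat) kernel" where
  "eop n \<gamma> = mmul (G n) (mmul (G n) Jop \<gamma>) (adj Jop)"

definition sandwich :: "nat \<Rightarrow> (nat \<Rightarrow> nat \<Rightarrow> complex) \<Rightarrow> nat \<Rightarrow> nat \<Rightarrow>
    (nat, nat) kernel \<Rightarrow> (nat, nat) kernel \<Rightarrow> ((nat \<times> nat) \<times> nat, (nat \<times> nat) \<times> nat) kernel" where
  "sandwich n b i j \<rho> \<gamma> =
     mmul ((G n \<times> G n) \<times> G n)
       (mmul ((G n \<times> G n) \<times> G n) (tensor (Fop n b i j) idop) (assoc_op (tensor \<rho> (eop n \<gamma>))))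
       (tensor (Fop n b i j) idop)"

definition Lambda :: "nat \<Rightarrow> (nat \<Rightarrow> nat \<Rightarrow> complex) \<Rightarrow> nat \<Rightarrow> nat \<Rightarrow>
    (nat, nat) kernel \<Rightarrow> (nat, nat) kernel \<Rightarrow> (nat, nat) kernel" where
  "Lambda n b i j \<rho> \<gamma> = (\<lambda>x y.
     ptrace1 (G n \<times> G n) (sandwich n b i j \<rho> \<gamma>) x y
       / trace ((G n \<times> G n) \<times> G n) (sandwich n b i j \<rho> \<gamma>))"

end

(*
  Write B for |conj b_i><conj b_i|.  If tau = sum_k g_k |h_k><h_k| with (h_k) orthonormal, then,
  the operators O_{h_k} being diagonal, K_tau(rho) is the entrywise product (x, y) |-> tau x y * rho x y.
  Every state has such a decomposition (spectral theorem, proved by Householder deflation), so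
  K_gamma and K_B are explicit, and the right-hand side is the kernel
  gamma x y * (B_i^* rho B_i)(x (+) j, y (+) j), normalised.

  On the other side, xi_{i,j} is a unit vector supported on the graph {(r (+) j, r)}, and compressing
  rho (x) e(gamma) by |xi><xi| (x) I gives the kernel
    ((p, s), (p', s')) |-> xi p * conj (xi p') * gamma s s' * (B_i^* rho B_i)(s (+) j, s' (+) j).
  Tracing out the first two factors therefore leaves K_gamma applied to U_j B_i^* rho B_i U_j^*, and the
  two normalisations agree since conjugation by U_j and K_gamma are linear.
*)
theory Submission
  imports Defs "Jordan_Normal_Form.Char_Poly" "HOL-Number_Theory.Cong"
begin

lemma if_zero_mult [simp]:
  "(if P then a else 0) * (b::complex) = (if P then a * b else 0)"
  "(b::complex) * (if P then a else 0) = (if P then b * a else 0)"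
  "cnj (if P then a else 0) = (if P then cnj a else 0)"
  by auto

lemma mmul_assoc:
  assumes "finite Z" "finite W"
  shows "mmul Z (mmul W A B) C = mmul W A (mmul Z B C)"
  unfolding mmul_def fun_eq_iff
  by (auto simp: sum_distrib_left sum_distrib_right mult.assoc intro: sum.swap)

lemma adj_mmul: "adj (mmul Z A B) = mmul Z (adj B) (adj A)"
  by (simp add: adj_def mmul_def fun_eq_iff mult.commute)

lemma mmul_cong:
  assumes "\<forall>z\<in>Z. A x z = A' x z" "\<forall>z\<in>Z. B z y = B' z y"
  shows "mmul Z A B x y = mmul Z A' B' x y"
  using assms unfolding mmul_def by (auto intro: sum.cong)

lemma mmul_idop_left: "finite Z \<Longrightarrow> x \<in> Z \<Longrightarrow> mmul Z idop B x y = B x y"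
  by (simp add: mmul_def idop_def)

lemma mmul_idop_right: "finite Z \<Longrightarrow> y \<in> Z \<Longrightarrow> mmul Z A idop x y = A x y"
  by (simp add: mmul_def idop_def)

lemma mmul_inverse_cancel_left:
  assumes "finite X" "\<forall>x\<in>X. \<forall>y\<in>X. mmul X P Q x y = idop x y" "x \<in> X"
  shows "mmul X P (mmul X Q Z) x y = Z x y"
proof -
  have "mmul X P (mmul X Q Z) x y = mmul X (mmul X P Q) Z x y"
    by (simp only: mmul_assoc[OF assms(1) assms(1)])
  also have "\<dots> = mmul X idop Z x y"
    using assms by (intro mmul_cong) auto
  finally show ?thesis using assms by (simp add: mmul_idop_left)
qed

lemma sum_conj_diag_eq_mmul:
  "finite X \<Longrightarrow> (\<Sum>k\<in>X. U x k * d k * cnj (U y k)) = mmul X (mmul X U (mult_op d)) (adj U) x y"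
  by (simp add: mmul_def mult_op_def adj_def cong: if_cong)

section \<open>Spectral theorem for Hermitian kernels\<close>

definition hermitian_on :: "'a set \<Rightarrow> ('a, 'a) kernel \<Rightarrow> bool" where
  "hermitian_on X A \<longleftrightarrow> (\<forall>x\<in>X. \<forall>y\<in>X. A y x = cnj (A x y))"

definition unitary_on :: "'a set \<Rightarrow> ('a, 'a) kernel \<Rightarrow> bool" where
  "unitary_on X U \<longleftrightarrow> (\<forall>k\<in>X. \<forall>l\<in>X. mmul X (adj U) U k l = idop k l)"

definition unitarily_diagonalizable_on :: "'a set \<Rightarrow> ('a, 'a) kernel \<Rightarrow> bool" where
  "unitarily_diagonalizable_on X A \<longleftrightarrow> (\<exists>U d. unitary_on X U \<and>
     (\<forall>x\<in>X. \<forall>y\<in>X. A x y = (\<Sum>k\<in>X. U x k * d k * cnj (U y k))))"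

lemma complex_mat_has_eigenvector:
  fixes M :: "complex mat"
  assumes M: "M \<in> carrier_mat m m" and m: "m > 0"
  obtains a v where "eigenvector M v a"
proof -
  obtain as where as: "char_poly M = (\<Prod>a\<leftarrow>as. [:- a, 1:])" "length as = m"
    using char_poly_factorized[OF M] by blast
  then obtain a rest where "as = a # rest" using m by (cases as) auto
  hence "poly (char_poly M) a = 0" unfolding as(1) by (simp add: poly_prod_list)
  hence "eigenvalue M a" using eigenvalue_root_char_poly[OF M] by simp
  thus ?thesis using that unfolding eigenvalue_def by blast
qed

lemma kernel_eigenvector_exists:
  fixes A :: "('a, 'a) kernel"
  assumes fin: "finite X" and ne: "X \<noteq> {}"
  obtains u \<mu> where "\<exists>x\<in>X. u x \<noteq> 0" "\<forall>x\<in>X. (\<Sum>y\<in>X. A x y * u y) = \<mu> * u x"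
proof -
  define m where "m = card X"
  have m0: "m > 0" using fin ne by (simp add: m_def card_gt_0_iff)
  obtain f where f: "bij_betw f {0..<m} X" using ex_bij_betw_nat_finite[OF fin] m_def by blast
  define M where "M = mat m m (\<lambda>(i,j). A (f i) (f j))"
  have Mc: "M \<in> carrier_mat m m" by (simp add: M_def)
  obtain a v where "eigenvector M v a" using complex_mat_has_eigenvector[OF Mc m0] .
  hence vc: "v \<in> carrier_vec m" and v0: "v \<noteq> 0\<^sub>v m" and Mv: "M *\<^sub>v v = a \<cdot>\<^sub>v v"
    unfolding eigenvector_def using Mc by auto
  define g where "g = the_inv_into {0..<m} f"
  have gf: "\<And>i. i < m \<Longrightarrow> g (f i) = i"
    unfolding g_def using f by (simp add: bij_betw_def the_inv_into_f_f)
  define u where "u x = v $ g x" for x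
  obtain i where i: "i < m" "v $ i \<noteq> 0"
  proof (rule ccontr)
    assume "\<not> thesis"
    hence "v = 0\<^sub>v m" using that vc by (intro eq_vecI) auto
    thus False using v0 by simp
  qed
  have "\<exists>x\<in>X. u x \<noteq> 0"
    using i f gf by (intro bexI[of _ "f i"]) (auto simp: u_def bij_betw_def)
  moreover have "(\<Sum>y\<in>X. A x y * u y) = a * u x" if x: "x \<in> X" for x
  proof -
    obtain i where i: "i < m" "x = f i" using f x by (auto simp: bij_betw_def)
    have "(\<Sum>y\<in>X. A x y * u y) = (\<Sum>j\<in>{0..<m}. A x (f j) * u (f j))"
      using sum.reindex_bij_betw[OF f, of "\<lambda>y. A x y * u y"] by simp
    also have "\<dots> = (\<Sum>j\<in>{0..<m}. M $$ (i, j) * v $ j)"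
      using i gf by (intro sum.cong) (auto simp: M_def u_def)
    also have "\<dots> = (M *\<^sub>v v) $ i"
      using i Mc vc by (simp add: mult_mat_vec_def scalar_prod_def row_def)
    finally show ?thesis using Mv i vc gf by (simp add: u_def)
  qed
  ultimately show ?thesis using that by blast
qed

lemma kernel_unit_eigenvector_exists:
  fixes A :: "('a, 'a) kernel"
  assumes fin: "finite X" and ne: "X \<noteq> {}"
  obtains u \<mu> where "(\<Sum>x\<in>X. cnj (u x) * u x) = 1" "\<forall>x\<in>X. (\<Sum>y\<in>X. A x y * u y) = \<mu> * u x"
proof -
  obtain v \<mu> where v: "\<exists>x\<in>X. v x \<noteq> 0" and ev: "\<forall>x\<in>X. (\<Sum>y\<in>X. A x y * v y) = \<mu> * v x"
    using kernel_eigenvector_exists[OF fin ne] by blast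
  define \<nu> where "\<nu> = (\<Sum>x\<in>X. (cmod (v x))\<^sup>2)"
  have "\<nu> > 0"
  proof -
    obtain x where "x \<in> X" "v x \<noteq> 0" using v by blast
    thus ?thesis unfolding \<nu>_def by (intro sum_pos2[OF fin]) auto
  qed
  define u where "u x = v x / of_real (sqrt \<nu>)" for x
  have "(\<Sum>x\<in>X. v x * cnj (v x)) = of_real \<nu>"
    unfolding \<nu>_def of_real_sum complex_norm_square ..
  moreover have "of_real (sqrt \<nu>) * of_real (sqrt \<nu>) = (of_real \<nu> :: complex)"
    using \<open>\<nu> > 0\<close> by (simp flip: of_real_mult)
  ultimately have "(\<Sum>x\<in>X. cnj (u x) * u x) = 1"
    using \<open>\<nu> > 0\<close> by (simp add: u_def mult.commute flip: sum_divide_distrib)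
  moreover have "\<forall>x\<in>X. (\<Sum>y\<in>X. A x y * u y) = \<mu> * u x"
    using ev by (simp add: u_def sum_divide_distrib[symmetric] mult.assoc)
  ultimately show ?thesis using that by blast
qed

lemma householder_involution:
  fixes w :: "'a \<Rightarrow> complex" and c :: real
  assumes fin: "finite X" and c: "c \<noteq> 0" and ww: "(\<Sum>z\<in>X. cnj (w z) * w z) = 2 * of_real c"
  defines "H \<equiv> \<lambda>x y. idop x y - w x * cnj (w y) / of_real c"
  shows "adj H = H" and "\<forall>x\<in>X. \<forall>y\<in>X. mmul X H H x y = idop x y"
proof -
  show "adj H = H" by (simp add: adj_def H_def idop_def fun_eq_iff)
  show "\<forall>x\<in>X. \<forall>y\<in>X. mmul X H H x y = idop x y"
  proof (intro ballI)
    fix x y assume x: "x \<in> X" and y: "y \<in> X"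
    have "H x z * H z y = idop x z * idop z y - (if z = x then w z * cnj (w y) / c else 0)
       - (if z = y then w x * cnj (w z) / c else 0) + w x * cnj (w y) / (c * c) * (cnj (w z) * w z)" for z
      using c by (auto simp: H_def idop_def field_simps)
    hence "mmul X H H x y = (\<Sum>z\<in>X. idop x z * idop z y) - w x * cnj (w y) / c
       - w x * cnj (w y) / c + w x * cnj (w y) / (c * c) * (\<Sum>z\<in>X. cnj (w z) * w z)"
      unfolding mmul_def using x y fin by (simp add: sum.distrib sum_subtractf sum_distrib_left)
    also have "\<dots> = idop x y"
      using x y fin c unfolding ww by (simp add: idop_def field_simps)
    finally show "mmul X H H x y = idop x y" .
  qed
qed

lemma reflection_onto_unit_vector:
  fixes u :: "'a \<Rightarrow> complex"
  assumes fin: "finite X" and x0: "x0 \<in> X" and unit: "(\<Sum>x\<in>X. cnj (u x) * u x) = 1"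
  obtains H p where "adj H = H" and "\<forall>x\<in>X. \<forall>y\<in>X. mmul X H H x y = idop x y"
    and "\<forall>x. H x x0 = p * u x"
proof -
  define r where "r = cmod (u x0)"
  \<comment> \<open>p is the phase of u x0, which keeps w = u + p e_x0 of squared norm 2 (1 + r) > 0.\<close>
  define p where "p = (if u x0 = 0 then 1 else u x0 / of_real r)"
  have "cmod p = 1" by (simp add: p_def r_def norm_divide)
  hence pp: "cnj p * p = 1" using complex_norm_square[of p] by (simp add: mult.commute)
  have pu: "u x0 = of_real r * p" by (simp add: p_def r_def)
  define w where "w x = u x + p * idop x x0" for x
  have "cnj (w z) * w z = cnj (u z) * u z
      + (if z = x0 then cnj p * u x0 + p * cnj (u x0) + cnj p * p else 0)" for z
    by (auto simp: w_def idop_def algebra_simps)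
  hence "(\<Sum>z\<in>X. cnj (w z) * w z) = 1 + (cnj p * u x0 + p * cnj (u x0) + cnj p * p)"
    using unit x0 fin by (simp add: sum.distrib)
  also have "\<dots> = 2 * of_real (1 + r)"
    unfolding pu using pp by (simp add: algebra_simps)
  finally have ww: "(\<Sum>z\<in>X. cnj (w z) * w z) = 2 * of_real (1 + r)" .
  have r: "1 + r \<noteq> 0" by (simp add: r_def add_nonneg_eq_0_iff)
  define H where "H = (\<lambda>x y. idop x y - w x * cnj (w y) / of_real (1 + r))"
  note invol = householder_involution[OF fin r ww, folded H_def]
  have "cnj (w x0) = of_real (1 + r) * cnj p"
    using pp unfolding w_def idop_def pu by (simp add: algebra_simps)
  hence "H x x0 = idop x x0 - w x * cnj p" for x
    using r unfolding H_def by (simp del: of_real_add)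
  also have "idop x x0 - w x * cnj p = - cnj p * u x" for x
    using pp by (simp add: w_def algebra_simps)
  finally have "H x x0 = - cnj p * u x" for x .
  with invol show ?thesis using that by blast
qed

lemma unitary_on_mmul_involution:
  assumes fin: "finite X" and H: "adj H = H" and HH: "\<forall>x\<in>X. \<forall>y\<in>X. mmul X H H x y = idop x y"
    and V: "unitary_on X V"
  shows "unitary_on X (mmul X H V)"
  unfolding unitary_on_def
proof (intro ballI)
  fix k l assume "k \<in> X" "l \<in> X"
  have "mmul X (adj (mmul X H V)) (mmul X H V) k l = mmul X (adj V) (mmul X H (mmul X H V)) k l"
    unfolding adj_mmul H by (simp only: mmul_assoc[OF fin fin])
  also have "\<dots> = mmul X (adj V) V k l"
    using mmul_inverse_cancel_left[OF fin HH] by (intro mmul_cong) auto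
  finally show "mmul X (adj (mmul X H V)) (mmul X H V) k l = idop k l"
    using V \<open>k \<in> X\<close> \<open>l \<in> X\<close> unfolding unitary_on_def by simp
qed

lemma unitarily_diagonalizable_conj_involution:
  assumes fin: "finite X" and H: "adj H = H" and HH: "\<forall>x\<in>X. \<forall>y\<in>X. mmul X H H x y = idop x y"
    and diag: "unitarily_diagonalizable_on X (mmul X (mmul X H A) H)"
  shows "unitarily_diagonalizable_on X A"
proof -
  obtain V d where V: "unitary_on X V"
    and rep: "\<forall>x\<in>X. \<forall>y\<in>X. mmul X (mmul X H A) H x y = (\<Sum>k\<in>X. V x k * d k * cnj (V y k))"
    using diag unfolding unitarily_diagonalizable_on_def by blast
  define U where "U = mmul X H V"
  have adjU: "adj U = mmul X (adj V) H" unfolding U_def adj_mmul H ..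
  have "unitary_on X U"
    unfolding U_def by (rule unitary_on_mmul_involution[OF fin H HH V])
  moreover have "A x y = (\<Sum>k\<in>X. U x k * d k * cnj (U y k))" if x: "x \<in> X" and y: "y \<in> X" for x y
  proof -
    have "(\<Sum>k\<in>X. U x k * d k * cnj (U y k)) = mmul X (mmul X U (mult_op d)) (adj U) x y"
      by (rule sum_conj_diag_eq_mmul[OF fin])
    also have "\<dots> = mmul X H (mmul X (mmul X (mmul X V (mult_op d)) (adj V)) H) x y"
      unfolding adjU unfolding U_def by (simp only: mmul_assoc[OF fin fin])
    also have "\<dots> = mmul X H (mmul X (mmul X (mmul X H A) H) H) x y"
    proof -
      have "mmul X (mmul X V (mult_op d)) (adj V) z v = mmul X (mmul X H A) H z v"
        if "z \<in> X" "v \<in> X" for z v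
        using rep that sum_conj_diag_eq_mmul[OF fin, of V z d v] by simp
      hence "mmul X (mmul X (mmul X V (mult_op d)) (adj V)) H z y = mmul X (mmul X (mmul X H A) H) H z y"
        if "z \<in> X" for z
        using that by (intro mmul_cong) auto
      thus ?thesis by (intro mmul_cong) auto
    qed
    also have "\<dots> = mmul X H (mmul X H (mmul X A (mmul X H H))) x y"
      by (simp only: mmul_assoc[OF fin fin])
    also have "\<dots> = mmul X A (mmul X H H) x y" by (rule mmul_inverse_cancel_left[OF fin HH x])
    also have "\<dots> = mmul X A idop x y" using HH y by (intro mmul_cong) auto
    finally show ?thesis using fin y by (simp add: mmul_idop_right)
  qed
  ultimately show ?thesis unfolding unitarily_diagonalizable_on_def by blast
qed

lemma unitarily_diagonalizable_insert:
  assumes fin: "finite Y" and x0: "x0 \<notin> Y"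
    and block: "\<forall>x\<in>Y. A x x0 = 0 \<and> A x0 x = 0"
    and diag: "unitarily_diagonalizable_on Y A"
  shows "unitarily_diagonalizable_on (insert x0 Y) A"
proof -
  obtain V d where V: "unitary_on Y V"
    and rep: "\<forall>x\<in>Y. \<forall>y\<in>Y. A x y = (\<Sum>k\<in>Y. V x k * d k * cnj (V y k))"
    using diag unfolding unitarily_diagonalizable_on_def by blast
  define U where "U x k = (if x = x0 \<or> k = x0 then idop x k else V x k)" for x k
  define d' where "d' k = (if k = x0 then A x0 x0 else d k)" for k
  have "mmul (insert x0 Y) (adj U) U k l = idop k l" if "k \<in> insert x0 Y" "l \<in> insert x0 Y" for k l
  proof -
    have "mmul (insert x0 Y) (adj U) U k l
        = idop x0 k * idop x0 l + (if k = x0 \<or> l = x0 then 0 else mmul Y (adj V) V k l)"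
      using fin x0 by (auto simp: mmul_def adj_def U_def idop_def intro!: sum.neutral sum.cong)
    thus ?thesis using V that unfolding unitary_on_def by (auto simp: idop_def)
  qed
  moreover have "A x y = (\<Sum>k\<in>insert x0 Y. U x k * d' k * cnj (U y k))"
    if "x \<in> insert x0 Y" "y \<in> insert x0 Y" for x y
  proof -
    have "(\<Sum>k\<in>insert x0 Y. U x k * d' k * cnj (U y k))
        = idop x x0 * A x0 x0 * idop y x0 + (if x = x0 \<or> y = x0 then 0 else (\<Sum>k\<in>Y. V x k * d k * cnj (V y k)))"
      using fin x0 by (auto simp: U_def d'_def idop_def intro!: sum.neutral sum.cong)
    thus ?thesis using rep block that by (auto simp: idop_def)
  qed
  ultimately show ?thesis unfolding unitarily_diagonalizable_on_def unitary_on_def by blast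
qed

lemma hermitian_on_conj_selfadjoint:
  assumes fin: "finite X" and herm: "hermitian_on X A" and H: "adj H = H"
  shows "hermitian_on X (mmul X (mmul X H A) H)"
  unfolding hermitian_on_def
proof (intro ballI)
  fix x y assume "x \<in> X" "y \<in> X"
  have "adj A z v = A z v" if "z \<in> X" "v \<in> X" for z v
  proof -
    have "A z v = cnj (A v z)" using herm that unfolding hermitian_on_def by blast
    thus ?thesis by (simp add: adj_def)
  qed
  hence "mmul X (adj A) H z x = mmul X A H z x" if "z \<in> X" for z
    using that by (intro mmul_cong) auto
  hence "mmul X H (mmul X (adj A) H) y x = mmul X H (mmul X A H) y x"
    by (intro mmul_cong) auto
  hence "adj (mmul X (mmul X H A) H) y x = mmul X (mmul X H A) H y x"
    unfolding adj_mmul H by (simp only: mmul_assoc[OF fin fin])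
  thus "mmul X (mmul X H A) H y x = cnj (mmul X (mmul X H A) H x y)"
    by (simp add: adj_def)
qed

text \<open>H is a reflection taking e_x0 to a unit eigenvector of A, so e_x0 is an
  eigenvector of the Hermitian kernel H A H.\<close>
lemma hermitian_deflation:
  assumes fin: "finite X" and x0: "x0 \<in> X" and herm: "hermitian_on X A"
  obtains H where "adj H = H" and "\<forall>x\<in>X. \<forall>y\<in>X. mmul X H H x y = idop x y"
    and "hermitian_on X (mmul X (mmul X H A) H)"
    and "\<forall>x\<in>X - {x0}. mmul X (mmul X H A) H x x0 = 0 \<and> mmul X (mmul X H A) H x0 x = 0"
proof -
  obtain u \<mu> where unit: "(\<Sum>x\<in>X. cnj (u x) * u x) = 1"
    and ev: "\<forall>x\<in>X. (\<Sum>y\<in>X. A x y * u y) = \<mu> * u x"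
    using kernel_unit_eigenvector_exists[OF fin] x0 by blast
  obtain H p where H: "adj H = H" and HH: "\<forall>x\<in>X. \<forall>y\<in>X. mmul X H H x y = idop x y"
    and Hx0: "\<forall>x. H x x0 = p * u x"
    using reflection_onto_unit_vector[OF fin x0 unit] by blast
  define A' where "A' = mmul X (mmul X H A) H"
  have herm': "hermitian_on X A'"
    unfolding A'_def using hermitian_on_conj_selfadjoint[OF fin herm H] .
  have "mmul X A H y x0 = \<mu> * H y x0" if "y \<in> X" for y
    using ev Hx0 that by (simp add: mmul_def mult.left_commute flip: sum_distrib_left)
  hence "mmul X H (mmul X A H) x x0 = (\<Sum>y\<in>X. H x y * (\<mu> * H y x0))" for x
    unfolding mmul_def[of X H "mmul X A H"] by (intro sum.cong) auto
  hence "A' x x0 = \<mu> * mmul X H H x x0" for x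
    unfolding A'_def mmul_assoc[OF fin fin] by (simp add: mmul_def[of X H H] sum_distrib_left mult_ac)
  hence "A' x x0 = 0" if "x \<in> X - {x0}" for x
    using HH that x0 by (simp add: idop_def)
  moreover have "A' x0 x = cnj (A' x x0)" if "x \<in> X" for x
    using herm' that x0 unfolding hermitian_on_def by blast
  ultimately have "\<forall>x\<in>X - {x0}. A' x x0 = 0 \<and> A' x0 x = 0" by simp
  with H HH herm' show ?thesis using that unfolding A'_def by blast
qed

theorem hermitian_unitarily_diagonalizable:
  assumes "finite X" and "hermitian_on X A"
  shows "unitarily_diagonalizable_on X A"
  using assms
proof (induction X arbitrary: A rule: finite_remove_induct)
  case empty
  show ?case by (simp add: unitarily_diagonalizable_on_def unitary_on_def)
next
  case (remove X A)
  note fin = remove.hyps(1)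
  obtain x0 where x0: "x0 \<in> X" using remove.hyps(2) by blast
  obtain H where H: "adj H = H" and HH: "\<forall>x\<in>X. \<forall>y\<in>X. mmul X H H x y = idop x y"
    and herm': "hermitian_on X (mmul X (mmul X H A) H)"
    and block: "\<forall>x\<in>X - {x0}. mmul X (mmul X H A) H x x0 = 0 \<and> mmul X (mmul X H A) H x0 x = 0"
    using hermitian_deflation[OF fin x0 remove.prems] by blast
  have "unitarily_diagonalizable_on (X - {x0}) (mmul X (mmul X H A) H)"
    using remove.IH[OF x0] herm' unfolding hermitian_on_def by blast
  hence "unitarily_diagonalizable_on (insert x0 (X - {x0})) (mmul X (mmul X H A) H)"
    using fin by (intro unitarily_diagonalizable_insert[OF _ _ block]) auto
  hence "unitarily_diagonalizable_on X (mmul X (mmul X H A) H)"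
    using x0 by (simp add: insert_absorb)
  thus ?case by (rule unitarily_diagonalizable_conj_involution[OF fin H HH])
qed

lemma quadratic_form_restrict:
  assumes "finite X" "S \<subseteq> X" "\<forall>z. z \<notin> S \<longrightarrow> \<phi> z = 0"
  shows "(\<Sum>a\<in>X. \<Sum>b\<in>X. cnj (\<phi> a) * A a b * \<phi> b) = (\<Sum>a\<in>S. \<Sum>b\<in>S. cnj (\<phi> a) * A a b * \<phi> b)"
proof -
  have "(\<Sum>b\<in>X. cnj (\<phi> a) * A a b * \<phi> b) = (\<Sum>b\<in>S. cnj (\<phi> a) * A a b * \<phi> b)" for a
    using assms by (intro sum.mono_neutral_right) auto
  hence "(\<Sum>a\<in>X. \<Sum>b\<in>X. cnj (\<phi> a) * A a b * \<phi> b) = (\<Sum>a\<in>X. \<Sum>b\<in>S. cnj (\<phi> a) * A a b * \<phi> b)"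
    by simp
  also have "\<dots> = (\<Sum>a\<in>S. \<Sum>b\<in>S. cnj (\<phi> a) * A a b * \<phi> b)"
    by (rule sum.mono_neutral_right) (use assms in auto)
  finally show ?thesis .
qed

lemma positive_op_hermitian:
  assumes fin: "finite X" and pos: "positive_op X A"
  shows "hermitian_on X A"
  unfolding hermitian_on_def
proof (intro ballI)
  fix x y assume x: "x \<in> X" and y: "y \<in> X"
  have Q: "0 \<le> (\<Sum>a\<in>X. \<Sum>b\<in>X. cnj (\<phi> a) * A a b * \<phi> b)" for \<phi>
    using pos unfolding positive_op_def by blast
  have diag: "Im (A z z) = 0" if z: "z \<in> X" for z
  proof -
    define \<phi> where "\<phi> v = (if v = z then 1 else 0::complex)" for v
    have "0 \<le> (\<Sum>a\<in>{z}. \<Sum>b\<in>{z}. cnj (\<phi> a) * A a b * \<phi> b)"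
      using Q[of \<phi>] quadratic_form_restrict[OF fin, of "{z}" \<phi> A] z by (auto simp: \<phi>_def)
    thus ?thesis by (simp add: \<phi>_def less_eq_complex_def)
  qed
  show "A y x = cnj (A x y)"
  proof (cases "x = y")
    case True
    thus ?thesis using diag[OF x] by (simp add: complex_eq_iff)
  next
    case False
    define \<phi>1 where "\<phi>1 v = (if v = x then 1 else if v = y then 1 else 0::complex)" for v
    define \<phi>2 where "\<phi>2 v = (if v = x then 1 else if v = y then \<i> else 0::complex)" for v
    have "0 \<le> (\<Sum>a\<in>{x,y}. \<Sum>b\<in>{x,y}. cnj (\<phi>1 a) * A a b * \<phi>1 b)"
      using Q[of \<phi>1] quadratic_form_restrict[OF fin, of "{x,y}" \<phi>1 A] x y by (auto simp: \<phi>1_def)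
    hence "Im (A x y) + Im (A y x) = 0"
      using False diag[OF x] diag[OF y] by (simp add: \<phi>1_def less_eq_complex_def)
    moreover have "0 \<le> (\<Sum>a\<in>{x,y}. \<Sum>b\<in>{x,y}. cnj (\<phi>2 a) * A a b * \<phi>2 b)"
      using Q[of \<phi>2] quadratic_form_restrict[OF fin, of "{x,y}" \<phi>2 A] x y by (auto simp: \<phi>2_def)
    hence "Re (A x y) - Re (A y x) = 0"
      using False diag[OF x] diag[OF y] by (simp add: \<phi>2_def less_eq_complex_def)
    ultimately show ?thesis by (simp add: complex_eq_iff)
  qed
qed

lemma unitary_diagonal_quadratic_form:
  assumes fin: "finite X" and U: "unitary_on X U" and k: "k \<in> X"
  shows "(\<Sum>x\<in>X. \<Sum>y\<in>X. cnj (U x k) * (\<Sum>l\<in>X. U x l * d l * cnj (U y l)) * U y k) = d k"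
proof -
  have "(\<Sum>x\<in>X. \<Sum>y\<in>X. cnj (U x k) * (\<Sum>l\<in>X. U x l * d l * cnj (U y l)) * U y k)
      = (\<Sum>x\<in>X. \<Sum>y\<in>X. \<Sum>l\<in>X. d l * (cnj (U x k) * U x l) * (cnj (U y l) * U y k))"
    by (simp add: sum_distrib_left sum_distrib_right mult_ac)
  also have "\<dots> = (\<Sum>x\<in>X. \<Sum>l\<in>X. \<Sum>y\<in>X. d l * (cnj (U x k) * U x l) * (cnj (U y l) * U y k))"
    by (rule sum.cong[OF refl], rule sum.swap)
  also have "\<dots> = (\<Sum>l\<in>X. \<Sum>x\<in>X. \<Sum>y\<in>X. d l * (cnj (U x k) * U x l) * (cnj (U y l) * U y k))"
    by (rule sum.swap)
  also have "\<dots> = (\<Sum>l\<in>X. d l * mmul X (adj U) U k l * mmul X (adj U) U l k)"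
    by (simp add: mmul_def adj_def sum_distrib_left sum_distrib_right mult_ac)
  also have "\<dots> = (\<Sum>l\<in>X. d l * idop k l * idop l k)"
    using U k unfolding unitary_on_def by (intro sum.cong) auto
  finally show ?thesis using fin k by (simp add: idop_def)
qed

section \<open>The maps K_\<tau>\<close>

lemma finite_G [simp]: "finite (G n)"
  by (simp add: G_def)

definition has_spectral_decomposition :: "nat \<Rightarrow> (nat, nat) kernel \<Rightarrow> bool" where
  "has_spectral_decomposition n \<tau> \<longleftrightarrow> (\<exists>\<gamma>s h. orthonormal_basis n h \<and> (\<forall>k\<in>G n. 0 \<le> \<gamma>s k) \<and>
     (\<forall>x\<in>G n. \<forall>y\<in>G n. \<tau> x y = (\<Sum>k\<in>G n. \<gamma>s k * ketbra (h k) x y)))"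

lemma positive_op_has_spectral_decomposition:
  assumes pos: "positive_op (G n) \<gamma>"
  shows "has_spectral_decomposition n \<gamma>"
proof -
  obtain U d where U: "unitary_on (G n) U"
    and rep: "\<forall>x\<in>G n. \<forall>y\<in>G n. \<gamma> x y = (\<Sum>k\<in>G n. U x k * d k * cnj (U y k))"
    using hermitian_unitarily_diagonalizable[OF finite_G positive_op_hermitian[OF finite_G pos]]
    unfolding unitarily_diagonalizable_on_def by blast
  define h where "h k x = U x k" for k x
  have "orthonormal_basis n h"
    using U unfolding orthonormal_basis_def unitary_on_def
    by (simp add: inner_def h_def mmul_def adj_def idop_def)
  moreover have "0 \<le> d k" if "k \<in> G n" for k
  proof -
    have "0 \<le> (\<Sum>x\<in>G n. \<Sum>y\<in>G n. cnj (h k x) * \<gamma> x y * h k y)"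
      using pos unfolding positive_op_def by blast
    also have "\<dots> = d k"
      using unitary_diagonal_quadratic_form[OF finite_G U that] rep by (simp add: h_def)
    finally show ?thesis .
  qed
  moreover have "\<forall>x\<in>G n. \<forall>y\<in>G n. \<gamma> x y = (\<Sum>k\<in>G n. d k * ketbra (h k) x y)"
    using rep by (simp add: ketbra_def h_def mult_ac)
  ultimately show ?thesis unfolding has_spectral_decomposition_def by blast
qed

lemma has_spectral_decomposition_ketbra_conj:
  assumes b: "orthonormal_basis n b" and i: "i \<in> G n"
  shows "has_spectral_decomposition n (ketbra (\<lambda>m. cnj (b i m)))"
  unfolding has_spectral_decomposition_def
proof (intro exI conjI)
  show "orthonormal_basis n (\<lambda>k m. cnj (b k m))"
    using b unfolding orthonormal_basis_def inner_def
    by (metis (no_types, lifting) complex_cnj_cnj complex_cnj_mult complex_cnj_one complex_cnj_zero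
        cnj_sum mult.commute sum.cong)
  show "\<forall>k\<in>G n. 0 \<le> (if k = i then 1 else 0 :: complex)"
    by (simp add: less_eq_complex_def)
  show "\<forall>x\<in>G n. \<forall>y\<in>G n. ketbra (\<lambda>m. cnj (b i m)) x y =
      (\<Sum>k\<in>G n. (if k = i then 1 else 0) * ketbra (\<lambda>m. cnj (b k m)) x y)"
    using i by simp
qed

lemma mmul_mult_op_adj:
  "finite X \<Longrightarrow> mmul X (mmul X (mult_op h) \<rho>) (adj (mult_op h)) x y
    = (if x \<in> X \<and> y \<in> X then h x * \<rho> x y * cnj (h y) else 0)"
  by (simp add: mmul_def mult_op_def adj_def)

lemma Kmap_apply:
  assumes "has_spectral_decomposition n \<tau>"
  shows "Kmap n \<tau> \<rho> x y = (if x \<in> G n \<and> y \<in> G n then \<tau> x y * \<rho> x y else 0)"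
  unfolding Kmap_def
  by (rule someI2_ex[where Q = "\<lambda>\<sigma>. \<sigma> x y = (if x \<in> G n \<and> y \<in> G n then \<tau> x y * \<rho> x y else 0)"])
    (use assms in \<open>auto simp: has_spectral_decomposition_def mmul_mult_op_adj sum_distrib_left
      ketbra_def mult_ac\<close>)

lemma Khat_divide:
  assumes "has_spectral_decomposition n \<tau>" and "c \<noteq> 0"
  shows "Khat n \<tau> (\<lambda>x y. M x y / c) = Khat n \<tau> M"
proof -
  have "Kmap n \<tau> (\<lambda>x y. M x y / c) = (\<lambda>x y. Kmap n \<tau> M x y / c)"
    using assms(1) by (simp add: Kmap_apply fun_eq_iff)
  thus ?thesis
    using assms(2) by (simp add: Khat_def trace_def fun_eq_iff flip: sum_divide_distrib)
qed

lemma Kconj_divide: "Kconj n j (\<lambda>x y. M x y / c) = (\<lambda>x y. Kconj n j M x y / c)"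
  by (simp add: Kconj_def mmul_def fun_eq_iff flip: sum_divide_distrib)

section \<open>Cyclic addition on G\<close>

lemma G_elem_eq_mod: "m \<in> G n \<Longrightarrow> m = (if m mod n = 0 then n else m mod n)"
  by (auto simp: G_def dest: le_neq_implies_less)

lemma oplus_eq:
  assumes "n \<ge> 1"
  shows "oplus n k l = (if (k + l) mod n = 0 then n else (k + l) mod n)"
  unfolding oplus_def
proof (rule the_equality)
  show "(if (k + l) mod n = 0 then n else (k + l) mod n) \<in> G n \<and>
    (if (k + l) mod n = 0 then n else (k + l) mod n) mod n = (k + l) mod n"
    using assms by (auto simp: G_def dest: le_neq_implies_less)
next
  fix m assume "m \<in> G n \<and> m mod n = (k + l) mod n"
  thus "m = (if (k + l) mod n = 0 then n else (k + l) mod n)" using G_elem_eq_mod by metis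
qed

lemma oplus_in_G: "n \<ge> 1 \<Longrightarrow> oplus n k l \<in> G n"
  by (auto simp: oplus_eq G_def)

lemma oplus_mod: "n \<ge> 1 \<Longrightarrow> oplus n k l mod n = (k + l) mod n"
  by (simp add: oplus_eq)

lemma oplus_commute: "oplus n k l = oplus n l k"
  by (simp add: oplus_def add.commute)

lemma bij_betw_oplus_right:
  assumes n: "n \<ge> 1"
  shows "bij_betw (\<lambda>r. oplus n r j) (G n) (G n)"
proof -
  have "inj_on (\<lambda>r. oplus n r j) (G n)"
  proof (rule inj_onI)
    fix r r' assume "r \<in> G n" "r' \<in> G n" "oplus n r j = oplus n r' j"
    hence "(r + j) mod n = (r' + j) mod n" by (metis oplus_mod[OF n])
    hence "r mod n = r' mod n" by (metis cong_add_rcancel_nat cong_def)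
    thus "r = r'" using G_elem_eq_mod \<open>r \<in> G n\<close> \<open>r' \<in> G n\<close> by metis
  qed
  moreover have "(\<lambda>r. oplus n r j) ` G n = G n"
    by (rule endo_inj_surj[OF finite_G _ calculation]) (use oplus_in_G[OF n] in auto)
  ultimately show ?thesis by (simp add: bij_betw_def)
qed

lemma Kconj_apply: "n \<ge> 1 \<Longrightarrow> Kconj n j M x y = M (oplus n j x) (oplus n j y)"
  using oplus_in_G by (simp add: Kconj_def mmul_def Uop_def adj_def)

section \<open>Compression by F_(i,j) \<otimes> I\<close>

lemma eop_apply:
  "eop n \<gamma> (b, c) (b', c') = (if b = c \<and> b' = c' \<and> b \<in> G n \<and> b' \<in> G n then \<gamma> b b' else 0)"
proof -
  have "mmul (G n) Jop \<gamma> (b, c) z = (if b = c \<and> b \<in> G n then \<gamma> b z else 0)" for b c z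
    by (cases "b = c") (simp_all add: mmul_def Jop_def)
  thus ?thesis
    unfolding eop_def mmul_def[of _ "mmul (G n) Jop \<gamma>"]
    by (cases "b' = c'") (auto simp: adj_def Jop_def)
qed

lemma compress_tensor_ketbra_idop:
  assumes "finite Y" "s \<in> Y" "s' \<in> Y"
  shows "mmul (X \<times> Y) (mmul (X \<times> Y) (tensor (ketbra v) idop) M) (tensor (ketbra v) idop) (p, s) (p', s')
    = v p * cnj (v p') * (\<Sum>q\<in>X. \<Sum>q'\<in>X. cnj (v q) * M (q, s) (q', s') * v q')"
proof -
  define L where "L = mmul (X \<times> Y) (tensor (ketbra v) idop) M"
  have L: "L (p, s) (q', c') = v p * (\<Sum>q\<in>X. cnj (v q) * M (q, s) (q', c'))" for q' c'
    unfolding L_def using assms(1,2)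
    by (simp add: mmul_def tensor_def ketbra_def idop_def sum.cartesian_product' sum_distrib_left mult_ac)
  have "mmul (X \<times> Y) L (tensor (ketbra v) idop) (p, s) (p', s')
      = (\<Sum>q'\<in>X. L (p, s) (q', s') * (v q' * cnj (v p')))"
    unfolding mmul_def sum.cartesian_product' using assms(1,3) by (simp add: tensor_def ketbra_def idop_def)
  also have "\<dots> = (\<Sum>q'\<in>X. \<Sum>q\<in>X. v p * cnj (v p') * (cnj (v q) * M (q, s) (q', s') * v q'))"
    by (simp add: L sum_distrib_left sum_distrib_right mult_ac)
  also have "\<dots> = v p * cnj (v p') * (\<Sum>q\<in>X. \<Sum>q'\<in>X. cnj (v q) * M (q, s) (q', s') * v q')"
    by (subst sum.swap) (simp add: sum_distrib_left)
  finally show ?thesis unfolding L_def .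
qed

lemma sandwich_apply:
  assumes n: "n \<ge> 1" and s: "s \<in> G n" and s': "s' \<in> G n"
  shows "sandwich n b i j \<rho> \<gamma> (p, s) (p', s') = xi n b i j p * cnj (xi n b i j p') *
    (\<gamma> s s' * (cnj (b i (oplus n s j)) * \<rho> (oplus n s j) (oplus n s' j) * b i (oplus n s' j)))"
proof -
  let ?\<xi> = "xi n b i j" and ?M = "assoc_op (tensor \<rho> (eop n \<gamma>))"
  let ?t = "\<lambda>a. \<rho> a (oplus n s' j) * \<gamma> s s' * b i (oplus n s' j)"
  have M: "?M ((a, c), s) ((a', c'), s') = \<rho> a a' * (if c = s then if c' = s' then \<gamma> s s' else 0 else 0)"
    for a c a' c'
    using s s' by (simp add: assoc_op_def tensor_def eop_apply)
  have X: "?\<xi> (a, c) = (if a = oplus n c j then b i a else 0)" for a c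
    by (simp add: xi_def)
  have "?M (q, s) (q', s') * ?\<xi> q' = (if q' = (oplus n s' j, s') then if snd q = s then ?t (fst q) else 0 else 0)"
    for q q'
    by (cases q; cases q') (auto simp: M X)
  hence inner: "(\<Sum>q'\<in>G n \<times> G n. ?M (q, s) (q', s') * ?\<xi> q') = (if snd q = s then ?t (fst q) else 0)" for q
    using s' oplus_in_G[OF n] by simp
  have "cnj (?\<xi> q) * (if snd q = s then ?t (fst q) else 0)
      = (if q = (oplus n s j, s) then cnj (b i (oplus n s j)) * ?t (oplus n s j) else 0)" for q
    by (cases q) (auto simp: X)
  hence "(\<Sum>q\<in>G n \<times> G n. \<Sum>q'\<in>G n \<times> G n. cnj (?\<xi> q) * ?M (q, s) (q', s') * ?\<xi> q')
      = cnj (b i (oplus n s j)) * ?t (oplus n s j)"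
    using s oplus_in_G[OF n] by (simp add: mult.assoc inner flip: sum_distrib_left)
  moreover have "sandwich n b i j \<rho> \<gamma> (p, s) (p', s') = ?\<xi> p * cnj (?\<xi> p') *
      (\<Sum>q\<in>G n \<times> G n. \<Sum>q'\<in>G n \<times> G n. cnj (?\<xi> q) * ?M (q, s) (q', s') * ?\<xi> q')"
    unfolding sandwich_def Fop_def by (rule compress_tensor_ketbra_idop[OF finite_G s s'])
  ultimately show ?thesis by (simp add: mult_ac)
qed

lemma xi_norm:
  assumes n: "n \<ge> 1" and b: "orthonormal_basis n b" and i: "i \<in> G n"
  shows "(\<Sum>p\<in>G n \<times> G n. xi n b i j p * cnj (xi n b i j p)) = 1"
proof -
  have "(\<Sum>p\<in>G n \<times> G n. xi n b i j p * cnj (xi n b i j p))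
      = (\<Sum>r\<in>G n. \<Sum>m\<in>G n. if m = oplus n r j then cnj (b i m) * b i m else 0)"
    unfolding sum.cartesian_product' by (subst sum.swap) (auto simp: xi_def intro!: sum.cong)
  also have "\<dots> = (\<Sum>r\<in>G n. cnj (b i (oplus n r j)) * b i (oplus n r j))"
    using oplus_in_G[OF n] by simp
  also have "\<dots> = (\<Sum>m\<in>G n. cnj (b i m) * b i m)"
    using sum.reindex_bij_betw[OF bij_betw_oplus_right[OF n]] by simp
  also have "\<dots> = 1"
    using b i unfolding orthonormal_basis_def inner_def by simp
  finally show ?thesis .
qed

lemma trace_ptrace1: "trace (X \<times> Y) C = trace Y (ptrace1 X C)"
  unfolding trace_def ptrace1_def sum.cartesian_product' by (rule sum.swap)

lemma ptrace1_sandwich: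
  assumes n: "n \<ge> 1" and b: "orthonormal_basis n b" and i: "i \<in> G n"
    and x: "x \<in> G n" and y: "y \<in> G n"
  shows "ptrace1 (G n \<times> G n) (sandwich n b i j \<rho> \<gamma>) x y
    = \<gamma> x y * Kconj n j (Kmap n (ketbra (\<lambda>m. cnj (b i m))) \<rho>) x y"
proof -
  have "ptrace1 (G n \<times> G n) (sandwich n b i j \<rho> \<gamma>) x y
      = (\<Sum>p\<in>G n \<times> G n. xi n b i j p * cnj (xi n b i j p)) *
        (\<gamma> x y * (cnj (b i (oplus n x j)) * \<rho> (oplus n x j) (oplus n y j) * b i (oplus n y j)))"
    unfolding ptrace1_def sandwich_apply[OF n x y] by (simp add: sum_distrib_right)
  moreover have "Kmap n (ketbra (\<lambda>m. cnj (b i m))) \<rho> u v = cnj (b i u) * b i v * \<rho> u v"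
    if "u \<in> G n" "v \<in> G n" for u v
    using that Kmap_apply[OF has_spectral_decomposition_ketbra_conj[OF b i], of \<rho> u v]
    by (simp add: ketbra_def)
  ultimately show ?thesis
    using xi_norm[OF n b i] oplus_in_G[OF n] by (simp add: Kconj_apply[OF n] oplus_commute[of n j])
qed

theorem proposition3:
  fixes n :: nat and b :: "nat \<Rightarrow> nat \<Rightarrow> complex" and i j :: nat
    and \<rho> \<gamma> :: "(nat, nat) kernel"
  assumes "n \<ge> 1"
    and "orthonormal_basis n b"
    and "i \<in> G n" and "j \<in> G n"
    and "is_state (G n) \<rho>"
    and "trace (G n) (Kmap n (ketbra (\<lambda>m. cnj (b i m))) \<rho>) > 0"
    and "is_state (G n) \<gamma>"
    and "trace (G n) (Kmap n \<gamma> (Kconj n j (Kmap n (ketbra (\<lambda>m. cnj (b i m))) \<rho>))) > 0"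
  shows "trace ((G n \<times> G n) \<times> G n) (sandwich n b i j \<rho> \<gamma>) > 0 \<and>
    (\<forall>x\<in>G n. \<forall>y\<in>G n.
       Lambda n b i j \<rho> \<gamma> x y = Khat n \<gamma> (Kconj n j (Khat n (ketbra (\<lambda>m. cnj (b i m))) \<rho>)) x y)"
proof -
  let ?B = "ketbra (\<lambda>m. cnj (b i m))"
  define K where "K = Kmap n \<gamma> (Kconj n j (Kmap n ?B \<rho>))"
  have \<gamma>: "has_spectral_decomposition n \<gamma>"
    using assms(7) positive_op_has_spectral_decomposition unfolding is_state_def by blast
  have ptrace: "ptrace1 (G n \<times> G n) (sandwich n b i j \<rho> \<gamma>) x y = K x y" if "x \<in> G n" "y \<in> G n" for x y
    using ptrace1_sandwich[OF assms(1-3) that] that by (simp add: K_def Kmap_apply[OF \<gamma>])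
  have trace: "trace ((G n \<times> G n) \<times> G n) (sandwich n b i j \<rho> \<gamma>) = trace (G n) K"
    unfolding trace_ptrace1 by (simp add: trace_def ptrace)
  have "Khat n \<gamma> (Kconj n j (Khat n ?B \<rho>)) = Khat n \<gamma> (Kconj n j (Kmap n ?B \<rho>))"
    using assms(6) by (simp add: Khat_def[of n ?B] Kconj_divide Khat_divide[OF \<gamma>])
  thus ?thesis
    using assms(8) by (simp add: trace ptrace Lambda_def Khat_def K_def)
qed

end
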